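(* For every integer $n \ge 5$, there exists an extremal point of $\Gamma(n)$ of rank $n$; hence $MR(n) \ge n$.
   Context: A state $\rho$ on $M_n(\mathbb{C}) \otimes M_n(\mathbb{C})$ is a marginal tracial state if $\rho(A\otimes I) = \mathrm{tr}(A)$ and $\rho(I \otimes B) = \mathrm{tr}(B)$ for all $A,B \in M_n(\mathbb{C})$, where $\mathrm{tr}$ is the normalized trace. $\Gamma(n)$ is the convex set of all marginal tracial states on $M_n(\mathbb{C}) \otimes M_n(\mathbb{C})$. For a state $\rho$, $\mathrm{rank}(\rho)$ is the rank of its density matrix. $MR(n)$ denotes the maximum of $\mathrm{rank}(\rho)$ over all extremal points $\rho$ of $\Gamma(n)$. *)

theory Defs
  imports "HOL-Analysis.Analysis"
begin

text \<open>Matrices in M_n(C) are indexed by a finite type 'n with CARD('n) = n;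
  M_n(C) (x) M_n(C) = M_{n^2}(C) is indexed by 'n \<times> 'n.
  A state is represented by its density matrix D, via rho(X) = trace (D ** X).\<close>

definition kron :: "complex^'n^'n \<Rightarrow> complex^'n^'n \<Rightarrow> complex^('n \<times> 'n)^('n \<times> 'n)" where
  "kron A B = (\<chi> p. \<chi> q. A $ fst p $ fst q * B $ snd p $ snd q)"

definition psd :: "complex^'m^'m \<Rightarrow> bool" where
  "psd D \<longleftrightarrow> (\<forall>a b. D $ a $ b = cnj (D $ b $ a)) \<and>
     (\<forall>x :: complex^'m. let q = (\<Sum>a\<in>UNIV. \<Sum>b\<in>UNIV. cnj (x $ a) * D $ a $ b * x $ b)
        in Im q = 0 \<and> Re q \<ge> 0)"

definition density :: "complex^'m^'m \<Rightarrow> bool" where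
  "density D \<longleftrightarrow> psd D \<and> trace D = 1"

definition state_of :: "complex^'m^'m \<Rightarrow> complex^'m^'m \<Rightarrow> complex" where
  "state_of D X = trace (D ** X)"

definition ntr :: "complex^'n^'n \<Rightarrow> complex" where
  "ntr A = trace A / of_nat CARD('n)"

definition Gamma_mt :: "(complex^('n::finite \<times> 'n)^('n \<times> 'n)) set" where
  "Gamma_mt = {D. density D \<and>
     (\<forall>A :: complex^'n^'n. state_of D (kron A (mat 1)) = ntr A) \<and>
     (\<forall>B :: complex^'n^'n. state_of D (kron (mat 1) B) = ntr B)}"

definition MR :: "'n::finite itself \<Rightarrow> nat" where
  "MR _ = Max (rank ` {D :: complex^('n \<times> 'n)^('n \<times> 'n). D extreme_point_of Gamma_mt})"

end

theory Submission
  imports Defs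
begin

text \<open>
  Fix an index \<open>i0 = idx0\<close> of the finite type \<open>'n\<close>, put \<open>N = CARD('n)\<close> and
  \<open>s = sqrt (N - 1)\<close>.  The witness is the Gram matrix \<open>W = \<Sum>c. |v c\<rangle>\<langle>v c|\<close> of the real
  vectors \<open>v i0 = (|i0 i0\<rangle> + s \<Sum>k\<noteq>i0. |k k\<rangle>) / N\<close> and \<open>v c = (|i0 c\<rangle> + |c i0\<rangle>) / N\<close>
  for \<open>c \<noteq> i0\<close>.  The development proceeds as follows.
  (1) General facts on positive semidefinite matrices: a vector isotropic for a psd matrix
      lies in its kernel, hence the kernel of an interior point of a segment of psd
      matrices is contained in the kernel of both endpoints; Gram matrices are psd.
  (2) The marginal conditions of \<open>Gamma_mt\<close> say exactly that both partial traces are \<open>I/N\<close>.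
  (3) \<open>W \<in> Gamma_mt\<close>.
  (4) Matrices annihilating the explicit kernel vectors of \<open>W\<close> (called compatible) are
      determined by their block of entries at rows and columns \<open>(i0,c)\<close>; for \<open>N \<ge> 3\<close>
      the first marginal condition pins this block down, so \<open>W\<close> is the only compatible
      element of \<open>Gamma_mt\<close>.  By (1) every point of \<open>Gamma_mt\<close> on a segment through \<open>W\<close>
      is compatible, hence \<open>W\<close> is extreme.
  (5) The rows \<open>(i0,c)\<close> of \<open>W\<close> are independent and span its row space, so \<open>rank W = N\<close>.
  The theorem (stated for \<open>N \<ge> 5\<close>; the argument works for \<open>N \<ge> 3\<close>) follows, together
  with the bound on \<open>MR\<close>, which is a maximum over a finite set of ranks.
\<close>

lemma sum_UNIV_single:
  fixes f :: "'a::finite \<Rightarrow> 'b::comm_monoid_add"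
  assumes "\<And>j. j \<noteq> a \<Longrightarrow> f j = 0"
  shows "sum f UNIV = f a"
proof -
  have "sum f UNIV = sum f {a}"
    by (rule sum.mono_neutral_right) (use assms in auto)
  then show ?thesis by simp
qed

lemma sum_UNIV_pair:
  fixes f :: "'a::finite \<Rightarrow> 'b::comm_monoid_add"
  assumes "a \<noteq> b" "\<And>j. j \<noteq> a \<Longrightarrow> j \<noteq> b \<Longrightarrow> f j = 0"
  shows "sum f UNIV = f a + f b"
proof -
  have "sum f UNIV = sum f {a,b}"
    by (rule sum.mono_neutral_right) (use assms in auto)
  then show ?thesis using assms by simp
qed

lemma sum_UNIV_prod:
  "(\<Sum>p\<in>(UNIV::('a::finite \<times> 'b::finite) set). f p) = (\<Sum>i\<in>UNIV. \<Sum>j\<in>UNIV. f (i,j))"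
  by (subst UNIV_Times_UNIV[symmetric]) (simp add: sum.cartesian_product split_def)

section \<open>Positive semidefinite matrices\<close>

definition hermitian :: "complex^'m^'m \<Rightarrow> bool" where
  "hermitian M \<longleftrightarrow> (\<forall>a b. M$a$b = cnj (M$b$a))"

definition qf :: "complex^'m^'m \<Rightarrow> complex^'m \<Rightarrow> complex" where
  "qf M x = (\<Sum>a\<in>UNIV. \<Sum>b\<in>UNIV. cnj (x $ a) * M $ a $ b * x $ b)"

lemma psd_iff_qf:
  "psd M \<longleftrightarrow> hermitian M \<and> (\<forall>x. Im (qf M x) = 0 \<and> Re (qf M x) \<ge> 0)"
  by (simp add: psd_def qf_def hermitian_def Let_def)

lemma qf_shift:
  fixes A :: "complex^'m::finite^'m"
  shows "qf A (\<chi> a. y$a + (if a = r then c else 0)) = qf A y + cnj c * (A *v y)$r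
     + c * (\<Sum>a\<in>UNIV. cnj (y$a) * A$a$r) + cnj c * c * A$r$r"
proof -
  have e: "\<And>a b. cnj (y$a + (if a = r then c else 0)) * A$a$b * (y$b + (if b = r then c else 0))
     = cnj (y$a) * A$a$b * y$b + (if a = r then cnj c * (A$r$b * y$b) else 0)
       + (if b = r then c * (cnj (y$a) * A$a$r) else 0) + (if a = r \<and> b = r then cnj c * c * A$r$r else 0)"
    by (auto simp: algebra_simps)
  have s1: "(\<Sum>a\<in>UNIV. \<Sum>b\<in>UNIV. (if a = r then cnj c * (A$r$b * y$b) else 0)) = cnj c * (A *v y)$r"
    by (subst sum_UNIV_single[of r]) (auto simp: sum_distrib_left matrix_vector_mult_def)
  have s2: "(\<Sum>a\<in>UNIV. \<Sum>b\<in>UNIV. (if b = r then c * (cnj (y$a) * A$a$r) else 0))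
      = c * (\<Sum>a\<in>UNIV. cnj (y$a) * A$a$r)"
    by (simp add: sum_distrib_left)
  have s3: "(\<Sum>a\<in>UNIV. \<Sum>b\<in>UNIV. (if a = r \<and> b = r then cnj c * c * A$r$r else 0)) = cnj c * c * A$r$r"
    by (subst sum_UNIV_single[of r]) auto
  show ?thesis
    unfolding qf_def vec_lambda_beta e sum.distrib s1 s2 s3 ..
qed

text \<open>An isotropic vector of a psd matrix lies in its kernel: otherwise a small step against
  \<open>(A y)$r\<close> in coordinate \<open>r\<close> would make the quadratic form negative.\<close>
lemma psd_isotropic_kernel:
  fixes A :: "complex^'m::finite^'m"
  assumes P: "psd A" and Q: "qf A y = 0"
  shows "A *v y = 0"
  unfolding vec_eq_iff
proof (intro allI)
  fix r
  define \<beta> where "\<beta> = (A *v y)$r"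
  have herm: "\<And>a b. A$a$b = cnj (A$b$a)" using P unfolding psd_iff_qf hermitian_def by blast
  have hb: "(\<Sum>a\<in>UNIV. cnj (y$a) * A$a$r) = cnj \<beta>"
    unfolding \<beta>_def matrix_vector_mult_def cnj_sum
    by (simp, intro sum.cong refl) (subst herm[of _ r], simp add: mult.commute)
  define m where "m = (cmod \<beta>)\<^sup>2"
  have bm: "cnj \<beta> * \<beta> = of_real m" unfolding m_def complex_norm_square by (rule mult.commute)
  define a where "a = Re (A$r$r)"
  have Ar: "A$r$r = of_real a"
    using herm[of r r] by (simp add: a_def complex_eq_iff)
  define t where "t = 1 / (\<bar>a\<bar> + 1)"
  have t0: "t > 0" by (simp add: t_def)
  have ta: "t * a < 2"
  proof -
    have "t * a \<le> t * \<bar>a\<bar>" using t0 by (simp add: mult_left_mono)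
    also have "\<dots> < 1" by (simp add: t_def field_simps)
    finally show ?thesis by simp
  qed
  define c where "c = - (of_real t * \<beta>)"
  have "qf A (\<chi> i. y$i + (if i = r then c else 0)) = cnj c * \<beta> + c * cnj \<beta> + cnj c * c * A$r$r"
    using qf_shift[of A y r c] Q hb by (simp add: \<beta>_def)
  also have "\<dots> = of_real (t * m * (t * a - 2))"
    unfolding c_def Ar by (simp add: algebra_simps bm[symmetric])
  finally have "t * m * (t * a - 2) \<ge> 0"
    using P unfolding psd_iff_qf by (metis Re_complex_of_real)
  moreover have "t * m * (t * a - 2) < 0" if "m > 0"
    using that t0 ta by (simp add: mult_pos_neg)
  moreover have "m \<ge> 0" by (simp add: m_def)
  ultimately have "m = 0" by fastforce
  then show "(A *v y)$r = 0$r" by (simp add: m_def \<beta>_def)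
qed

lemma qf_convex_comb:
  fixes A B :: "complex^'m::finite^'m"
  shows "qf ((1 - u) *\<^sub>R A + u *\<^sub>R B) y = of_real (1 - u) * qf A y + of_real u * qf B y"
proof -
  have e: "\<And>a b. ((1 - u) *\<^sub>R A + u *\<^sub>R B)$a$b = of_real (1 - u) * A$a$b + of_real u * B$a$b"
    unfolding vector_add_component vector_scaleR_component by (simp add: scaleR_conv_of_real)
  show ?thesis
    unfolding qf_def e sum_distrib_left sum.distrib[symmetric]
    by (intro sum.cong refl) (simp add: algebra_simps)
qed

text \<open>The kernel of an interior point of a segment of psd matrices is contained in the
  kernel of its endpoints.  This is the only way the extremality argument uses positivity.\<close>
lemma psd_segment_kernel:
  fixes A B :: "complex^'m::finite^'m"
  assumes A: "psd A" and B: "psd B" and u: "0 < u" "u < 1"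
    and y: "qf ((1 - u) *\<^sub>R A + u *\<^sub>R B) y = 0"
  shows "A *v y = 0"
proof (rule psd_isotropic_kernel[OF A])
  have a: "Im (qf A y) = 0" "Re (qf A y) \<ge> 0" and b: "Re (qf B y) \<ge> 0"
    using A B unfolding psd_iff_qf by blast+
  have "(1 - u) * Re (qf A y) + u * Re (qf B y) = 0"
    using arg_cong[OF y[unfolded qf_convex_comb], of Re] by simp
  then have "Re (qf A y) = 0" using a b u
    by (smt (verit) mult_nonneg_nonneg mult_pos_pos)
  then show "qf A y = 0" using a by (simp add: complex_eq_iff)
qed

definition gram :: "('c::finite \<Rightarrow> 'm \<Rightarrow> real) \<Rightarrow> complex^'m^'m" where
  "gram v = (\<chi> p q. complex_of_real (\<Sum>c\<in>UNIV. v c p * v c q))"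

lemma gram_entry: "gram v $ p $ q = complex_of_real (\<Sum>c\<in>UNIV. v c p * v c q)"
  by (simp add: gram_def)

lemma hermitian_gram: "hermitian (gram v)"
  by (simp add: hermitian_def gram_entry mult.commute)

lemma qf_gram:
  fixes v :: "'c::finite \<Rightarrow> 'm::finite \<Rightarrow> real"
  shows "qf (gram v) x = complex_of_real (\<Sum>c\<in>UNIV. (cmod (\<Sum>p\<in>UNIV. of_real (v c p) * x $ p))\<^sup>2)"
proof -
  let ?w = "\<lambda>c. \<Sum>p\<in>UNIV. complex_of_real (v c p) * x $ p"
  have "qf (gram v) x = (\<Sum>a\<in>UNIV. \<Sum>b\<in>UNIV. \<Sum>c\<in>UNIV.
           (of_real (v c a) * cnj (x $ a)) * (of_real (v c b) * x $ b))"
    unfolding qf_def gram_entry of_real_sum sum_distrib_left sum_distrib_right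
    by (intro sum.cong refl) (simp add: mult_ac)
  also have "\<dots> = (\<Sum>c\<in>UNIV. \<Sum>a\<in>UNIV. \<Sum>b\<in>UNIV.
           (of_real (v c a) * cnj (x $ a)) * (of_real (v c b) * x $ b))"
    by (subst sum.swap, rule sum.cong[OF refl], rule sum.swap)
  also have "\<dots> = (\<Sum>c\<in>UNIV. cnj (?w c) * ?w c)"
    by (simp only: sum_product cnj_sum complex_cnj_mult complex_cnj_complex_of_real)
  also have "\<dots> = complex_of_real (\<Sum>c\<in>UNIV. (cmod (?w c))\<^sup>2)"
    unfolding of_real_sum by (intro sum.cong refl) (simp only: complex_norm_square mult.commute)
  finally show ?thesis .
qed

lemma psd_gram: "psd (gram (v :: 'c::finite \<Rightarrow> 'm::finite \<Rightarrow> real))"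
  unfolding psd_iff_qf by (simp add: hermitian_gram qf_gram sum_nonneg)

lemma qf_gram_zero:
  assumes "\<And>c. (\<Sum>p\<in>UNIV. complex_of_real (v c p) * y $ p) = 0"
  shows "qf (gram (v :: 'c::finite \<Rightarrow> 'm::finite \<Rightarrow> real)) y = 0"
  by (simp add: qf_gram assms)

section \<open>Marginal conditions as partial traces\<close>

definition ptr_right :: "complex^('n::finite \<times> 'n)^('n \<times> 'n) \<Rightarrow> 'n \<Rightarrow> 'n \<Rightarrow> complex" where
  "ptr_right M i i' = (\<Sum>j\<in>UNIV. M$(i,j)$(i',j))"

definition ptr_left :: "complex^('n::finite \<times> 'n)^('n \<times> 'n) \<Rightarrow> 'n \<Rightarrow> 'n \<Rightarrow> complex" where
  "ptr_left M j j' = (\<Sum>i\<in>UNIV. M$(i,j)$(i,j'))"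

lemma state_kron_left:
  fixes M :: "complex^('n::finite \<times> 'n)^('n \<times> 'n)"
  shows "state_of M (kron X (mat 1)) = (\<Sum>i\<in>UNIV. \<Sum>i'\<in>UNIV. X$i'$i * ptr_right M i i')"
proof -
  have "state_of M (kron X (mat 1)) = (\<Sum>i\<in>UNIV. \<Sum>j\<in>UNIV. \<Sum>i'\<in>UNIV. \<Sum>j'\<in>UNIV.
          M$(i,j)$(i',j') * (X$i'$i * (if j' = j then 1 else 0)))"
    unfolding state_of_def trace_def matrix_matrix_mult_def kron_def
    by (simp add: sum_UNIV_prod mat_def)
  also have "\<dots> = (\<Sum>i\<in>UNIV. \<Sum>j\<in>UNIV. \<Sum>i'\<in>UNIV. X$i'$i * M$(i,j)$(i',j))"
    by (intro sum.cong refl, subst sum_UNIV_single) auto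
  also have "\<dots> = (\<Sum>i\<in>UNIV. \<Sum>i'\<in>UNIV. X$i'$i * ptr_right M i i')"
    unfolding ptr_right_def sum_distrib_left by (rule sum.cong[OF refl], rule sum.swap)
  finally show ?thesis .
qed

lemma state_kron_right:
  fixes M :: "complex^('n::finite \<times> 'n)^('n \<times> 'n)"
  shows "state_of M (kron (mat 1) X) = (\<Sum>j\<in>UNIV. \<Sum>j'\<in>UNIV. X$j'$j * ptr_left M j j')"
proof -
  have "state_of M (kron (mat 1) X) = (\<Sum>i\<in>UNIV. \<Sum>j\<in>UNIV. \<Sum>i'\<in>UNIV. \<Sum>j'\<in>UNIV.
          M$(i,j)$(i',j') * ((if i' = i then 1 else 0) * X$j'$j))"
    unfolding state_of_def trace_def matrix_matrix_mult_def kron_def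
    by (simp add: sum_UNIV_prod mat_def)
  also have "\<dots> = (\<Sum>i\<in>UNIV. \<Sum>j\<in>UNIV. \<Sum>j'\<in>UNIV. X$j'$j * M$(i,j)$(i,j'))"
  proof (rule sum.cong[OF refl], rule sum.cong[OF refl])
    fix i j
    show "(\<Sum>i'\<in>UNIV. \<Sum>j'\<in>UNIV. M$(i,j)$(i',j') * ((if i' = i then 1 else 0) * X$j'$j))
        = (\<Sum>j'\<in>UNIV. X$j'$j * M$(i,j)$(i,j'))"
      by (subst sum_UNIV_single[of i]) (auto simp: mult_ac)
  qed
  also have "\<dots> = (\<Sum>j\<in>UNIV. \<Sum>j'\<in>UNIV. X$j'$j * ptr_left M j j')"
    unfolding ptr_left_def sum_distrib_left
    by (subst sum.swap) (rule sum.cong[OF refl], rule sum.swap)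
  finally show ?thesis .
qed

lemma pairing_ntr_iff:
  fixes F :: "'n::finite \<Rightarrow> 'n \<Rightarrow> complex"
  shows "(\<forall>X :: complex^'n^'n. (\<Sum>i\<in>UNIV. \<Sum>i'\<in>UNIV. X$i'$i * F i i') = ntr X)
     \<longleftrightarrow> (\<forall>i i'. F i i' = (if i = i' then 1 / of_nat CARD('n) else 0))"
proof
  assume h: "\<forall>X :: complex^'n^'n. (\<Sum>i\<in>UNIV. \<Sum>i'\<in>UNIV. X$i'$i * F i i') = ntr X"
  show "\<forall>i i'. F i i' = (if i = i' then 1 / of_nat CARD('n) else 0)"
  proof (intro allI)
    fix i i' :: 'n
    define X :: "complex^'n^'n" where "X = (\<chi> a b. if a = i' \<and> b = i then 1 else 0)"
    have "(\<Sum>a\<in>UNIV. \<Sum>b\<in>UNIV. X$b$a * F a b) = F i i'"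
      by (subst sum_UNIV_single[of i], simp add: X_def, subst sum_UNIV_single[of i'])
         (simp_all add: X_def)
    moreover have "ntr X = (if i = i' then 1 / of_nat CARD('n) else 0)"
      unfolding ntr_def trace_def X_def by (subst sum_UNIV_single[of i]) auto
    ultimately show "F i i' = (if i = i' then 1 / of_nat CARD('n) else 0)"
      using h by metis
  qed
next
  assume F: "\<forall>i i'. F i i' = (if i = i' then 1 / of_nat CARD('n) else 0)"
  show "\<forall>X :: complex^'n^'n. (\<Sum>i\<in>UNIV. \<Sum>i'\<in>UNIV. X$i'$i * F i i') = ntr X"
  proof
    fix X :: "complex^'n^'n"
    have "(\<Sum>i\<in>UNIV. \<Sum>i'\<in>UNIV. X$i'$i * F i i') = (\<Sum>i\<in>UNIV. X$i$i / of_nat CARD('n))"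
      by (rule sum.cong[OF refl], subst sum_UNIV_single) (auto simp: F)
    then show "(\<Sum>i\<in>UNIV. \<Sum>i'\<in>UNIV. X$i'$i * F i i') = ntr X"
      by (simp add: ntr_def trace_def sum_divide_distrib)
  qed
qed

lemma Gamma_mt_iff:
  fixes M :: "complex^('n::finite \<times> 'n)^('n \<times> 'n)"
  shows "M \<in> Gamma_mt \<longleftrightarrow> density M
     \<and> (\<forall>i i'. ptr_right M i i' = (if i = i' then 1 / of_nat CARD('n) else 0))
     \<and> (\<forall>j j'. ptr_left M j j' = (if j = j' then 1 / of_nat CARD('n) else 0))"
  unfolding Gamma_mt_def state_kron_left state_kron_right pairing_ntr_iff[symmetric] by simp

section \<open>The witness\<close>

text \<open>A fixed index of the finite type; any choice works.  The weight \<open>s = sqrt (N - 1)\<close>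
  makes \<open>v i0\<close> have the right partial trace.\<close>
definition idx0 :: "'n::finite" where "idx0 = undefined"

definition diag_weight :: "'n::finite itself \<Rightarrow> real" where
  "diag_weight _ = sqrt (real CARD('n) - 1)"

lemma diag_weight_sq: "(diag_weight TYPE('n::finite))\<^sup>2 = real CARD('n) - 1"
  by (simp add: diag_weight_def Suc_le_eq)

lemma diag_weight_sq_complex:
  "(complex_of_real (diag_weight TYPE('n::finite)))\<^sup>2 = of_nat CARD('n) - 1"
proof -
  have "(complex_of_real (diag_weight TYPE('n)))\<^sup>2 = of_real (real CARD('n) - 1)"
    by (simp only: of_real_power[symmetric] diag_weight_sq)
  then show ?thesis by simp
qed

definition wvec :: "'n::finite \<Rightarrow> 'n \<times> 'n \<Rightarrow> real" where
  "wvec c p = (let N = real CARD('n) in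
     if fst p = idx0 then (if c = snd p then 1/N else 0)
     else if c = fst p \<and> snd p = idx0 then 1/N
     else if c = idx0 \<and> snd p = fst p then diag_weight TYPE('n) / N else 0)"

definition witness :: "complex^('n::finite \<times> 'n)^('n \<times> 'n)" where
  "witness = gram wvec"

definition supp :: "'n::finite \<times> 'n \<Rightarrow> bool" where
  "supp p \<longleftrightarrow> fst p = idx0 \<or> snd p = idx0 \<or> fst p = snd p"

lemma wvec_swap: "wvec c (i,j) = wvec c (j,i)"
  by (auto simp: wvec_def Let_def)

lemma wvec_nsupp: "\<not> supp p \<Longrightarrow> wvec c p = 0"
  by (auto simp: wvec_def supp_def Let_def)

lemma wvec_idx0: "wvec c (idx0, d) = (if c = d then 1 / real CARD('n::finite) else 0)"
  for c d :: "'n::finite"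
  by (simp add: wvec_def Let_def)

lemma wvec_diag: "k \<noteq> idx0 \<Longrightarrow> wvec c (k,k) = diag_weight TYPE('n) * wvec c (idx0,idx0)"
  for c k :: "'n::finite"
  by (simp add: wvec_def Let_def)

lemma witness_entry: "witness $ p $ q = complex_of_real (\<Sum>c\<in>UNIV. wvec c p * wvec c q)"
  by (simp add: witness_def gram_entry)

lemma witness_block:
  "(witness :: complex^('n::finite \<times> 'n)^('n \<times> 'n)) $ (idx0,c) $ (idx0,d)
     = (if c = d then 1 / (of_nat CARD('n))\<^sup>2 else 0)"
proof -
  have "(\<Sum>e\<in>UNIV. wvec e (idx0,c) * wvec e (idx0::'n,d))
      = (if c = d then 1 / (real CARD('n))\<^sup>2 else 0)"
    unfolding wvec_idx0 by (subst sum_UNIV_single[of c]) (auto simp: power2_eq_square)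
  then show ?thesis by (simp add: witness_entry)
qed

section \<open>Matrices compatible with the kernel of the witness\<close>

text \<open>\<open>M\<close> is hermitian and annihilates the kernel vectors of the witness: the unit vectors
  \<open>e p\<close> for \<open>p\<close> outside the support, \<open>e (k,i0) - e (i0,k)\<close> and \<open>e (k,k) - s e (i0,i0)\<close>.\<close>
definition compatible :: "complex^('n::finite \<times> 'n)^('n \<times> 'n) \<Rightarrow> bool" where
  "compatible M \<longleftrightarrow> hermitian M \<and> (\<forall>r p. \<not> supp p \<longrightarrow> M$r$p = 0)
    \<and> (\<forall>r k. k \<noteq> idx0 \<longrightarrow> M$r$(k,idx0) = M$r$(idx0,k))
    \<and> (\<forall>r k. k \<noteq> idx0 \<longrightarrow> M$r$(k,k) = of_real (diag_weight TYPE('n)) * M$r$(idx0,idx0))"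

text \<open>A hermitian matrix killing every isotropic vector of the witness is compatible: each
  of the kernel vectors listed above is orthogonal to all \<open>v c\<close>.\<close>
lemma compatible_if_kernel:
  fixes A :: "complex^('n::finite \<times> 'n)^('n \<times> 'n)"
  assumes herm: "hermitian A"
    and ker: "\<And>y. qf witness y = 0 \<Longrightarrow> A *v y = 0"
  shows "compatible A"
proof -
  have kill: "(\<Sum>b\<in>UNIV. A$r$b * y$b) = 0"
    if "\<And>c. (\<Sum>p\<in>UNIV. complex_of_real (wvec c p) * y $ p) = 0" for r y
  proof -
    have "qf witness y = 0" unfolding witness_def by (rule qf_gram_zero) (rule that)
    from ker[OF this] have "(A *v y) $ r = 0" by simp
    then show ?thesis by (simp add: matrix_vector_mult_def)
  qed
  have two: "(\<Sum>p\<in>UNIV. f p * ((if p = p1 then \<alpha> else 0) + (if p = p2 then \<beta> else 0)))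
      = f p1 * \<alpha> + f p2 * \<beta>" if "p1 \<noteq> p2" for f :: "'n \<times> 'n \<Rightarrow> complex" and p1 p2 \<alpha> \<beta>
    using that by (subst sum_UNIV_pair[of p1 p2]) auto
  have "A$r$p = 0" if "\<not> supp p" for r p
    using kill[of "\<chi> q. if q = p then 1 else 0" r]
    by (simp add: sum_UNIV_single[of p] wvec_nsupp[OF that])
  moreover have "A$r$(k,idx0) = A$r$(idx0,k)" if k: "k \<noteq> idx0" for r k
    using kill[of "\<chi> q. (if q = (k,idx0) then 1 else 0) + (if q = (idx0,k) then -1 else 0)" r] k
    by (simp add: two wvec_swap[of _ k])
  moreover have "A$r$(k,k) = of_real (diag_weight TYPE('n)) * A$r$(idx0,idx0)"
    if k: "k \<noteq> idx0" for r k
    using kill[of "\<chi> q. (if q = (k,k) then 1 else 0)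
                  + (if q = (idx0,idx0) then - of_real (diag_weight TYPE('n)) else 0)" r] k
    by (simp add: two wvec_diag)
  ultimately show ?thesis using herm unfolding compatible_def by blast
qed

lemma compatible_witness: "compatible (witness :: complex^('n::finite \<times> 'n)^('n \<times> 'n))"
  by (rule compatible_if_kernel)
     (simp_all add: witness_def hermitian_gram psd_isotropic_kernel psd_gram)

text \<open>Every entry of a compatible matrix is a fixed multiple of an entry of the block
  at rows and columns \<open>(idx0, c)\<close>: \<open>block_index\<close> picks the block entry, \<open>block_coeff\<close>
  the factor.\<close>
definition block_index :: "'n::finite \<times> 'n \<Rightarrow> 'n \<times> 'n" where
  "block_index q = (if fst q = idx0 then q else if snd q = idx0 then (idx0, fst q) else (idx0,idx0))"

definition block_coeff :: "'n::finite \<times> 'n \<Rightarrow> complex" where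
  "block_coeff q = (if fst q = idx0 \<or> snd q = idx0 then 1
     else if fst q = snd q then of_real (diag_weight TYPE('n)) else 0)"

context
  fixes M :: "complex^('n::finite \<times> 'n)^('n \<times> 'n)"
  assumes cM: "compatible M"
begin

lemma compat_herm: "M$a$b = cnj (M$b$a)"
  using cM unfolding compatible_def hermitian_def by blast

lemma compat_col_nsupp: "\<not> supp p \<Longrightarrow> M$r$p = 0"
  using cM unfolding compatible_def by blast

lemma compat_row_nsupp: "\<not> supp p \<Longrightarrow> M$p$r = 0"
  using compat_col_nsupp[of p r] compat_herm[of p r] by simp

lemma compat_col_swap: "k \<noteq> idx0 \<Longrightarrow> M$r$(k,idx0) = M$r$(idx0,k)"
  using cM unfolding compatible_def by blast

lemma compat_row_swap: "k \<noteq> idx0 \<Longrightarrow> M$(k,idx0)$r = M$(idx0,k)$r"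
  using compat_col_swap[of k r] compat_herm[of "(k,idx0)" r] compat_herm[of "(idx0,k)" r] by simp

lemma compat_col_diag: "k \<noteq> idx0 \<Longrightarrow> M$r$(k,k) = of_real (diag_weight TYPE('n)) * M$r$(idx0,idx0)"
  using cM unfolding compatible_def by blast

lemma compat_row_diag: "k \<noteq> idx0 \<Longrightarrow> M$(k,k)$r = of_real (diag_weight TYPE('n)) * M$(idx0,idx0)$r"
  using compat_col_diag[of k r] compat_herm[of "(k,k)" r] compat_herm[of "(idx0,idx0)" r] by simp

lemma compat_col_block: "M$r$q = block_coeff q * M$r$(block_index q)"
proof -
  obtain a b where q: "q = (a,b)" by force
  show ?thesis
    using compat_col_nsupp[of q r] compat_col_swap[of a r] compat_col_diag[of a r]
    by (auto simp: q block_coeff_def block_index_def supp_def)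
qed

lemma compat_block: "M$p$q = block_coeff p * block_coeff q * M$(block_index p)$(block_index q)"
proof -
  have real_coeff: "cnj (block_coeff p) = block_coeff p" by (simp add: block_coeff_def)
  have "M$p$q = block_coeff q * M$p$(block_index q)" by (rule compat_col_block)
  also have "M$p$(block_index q) = cnj (M$(block_index q)$p)" by (rule compat_herm)
  also have "M$(block_index q)$p = block_coeff p * M$(block_index q)$(block_index p)"
    by (rule compat_col_block)
  also have "M$(block_index q)$(block_index p) = cnj (M$(block_index p)$(block_index q))"
    by (rule compat_herm)
  finally show ?thesis using real_coeff by (simp add: mult_ac)
qed

lemma ptr_right_idx0_k:
  "k \<noteq> idx0 \<Longrightarrow> ptr_right M idx0 k
     = M$(idx0,idx0)$(idx0,k) + of_real (diag_weight TYPE('n)) * M$(idx0,k)$(idx0,idx0)"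
  unfolding ptr_right_def
  by (subst sum_UNIV_pair[of idx0 k])
     (auto intro: compat_col_nsupp simp: supp_def compat_col_swap compat_col_diag)

lemma ptr_right_k_l:
  assumes kl: "k \<noteq> idx0" "l \<noteq> idx0" "k \<noteq> l"
  shows "ptr_right M k l = M$(idx0,k)$(idx0,l)"
proof -
  have "ptr_right M k l = M $ (k, idx0) $ (l, idx0)"
    unfolding ptr_right_def
  proof (rule sum_UNIV_single)
    fix j :: 'n assume "j \<noteq> idx0"
    then show "M $ (k, j) $ (l, j) = 0"
      using kl by (cases "j = k") (auto intro: compat_col_nsupp compat_row_nsupp simp: supp_def)
  qed
  then show ?thesis using kl by (simp add: compat_row_swap compat_col_swap)
qed

lemma ptr_right_k_k:
  assumes k: "k \<noteq> idx0"
  shows "ptr_right M k k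
     = M$(idx0,k)$(idx0,k) + (of_nat CARD('n) - 1) * M$(idx0,idx0)$(idx0,idx0)"
proof -
  have "ptr_right M k k
     = M$(idx0,k)$(idx0,k) + (of_real (diag_weight TYPE('n)))\<^sup>2 * M$(idx0,idx0)$(idx0,idx0)"
    unfolding ptr_right_def using k
    by (subst sum_UNIV_pair[of idx0 k])
       (auto intro: compat_col_nsupp simp: supp_def compat_col_swap compat_row_swap
          compat_col_diag compat_row_diag power2_eq_square)
  then show ?thesis by (simp only: diag_weight_sq_complex)
qed

end

lemma compatible_eqI:
  assumes "compatible M" "compatible M'" "\<And>c d. M$(idx0,c)$(idx0,d) = M'$(idx0,c)$(idx0,d)"
  shows "M = M'"
proof -
  have "\<And>q. \<exists>c. block_index q = (idx0,c)" by (auto simp: block_index_def)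
  then have "\<And>p q. M$(block_index p)$(block_index q) = M'$(block_index p)$(block_index q)"
    using assms(3) by metis
  then show ?thesis
    unfolding vec_eq_iff using compat_block[OF assms(1)] compat_block[OF assms(2)] by metis
qed

lemma card_minus_two:
  assumes "CARD('n::finite) \<ge> 3"
  shows "(of_nat CARD('n) :: complex) - 2 \<noteq> 0"
proof
  assume "(of_nat CARD('n) :: complex) - 2 = 0"
  then have "(of_nat CARD('n) :: complex) = of_nat 2" by simp
  then have "CARD('n) = 2" by (simp only: of_nat_eq_iff)
  then show False using assms by simp
qed

text \<open>For the entries \<open>w = M$(i0,i0)$(i0,k)\<close> this uses
  \<open>w + s w\<^sup>* = 0\<close>, whence \<open>w = s\<^sup>2 w = (N-1) w\<close>.\<close>
lemma compatible_block_offdiag: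
  fixes M :: "complex^('n::finite \<times> 'n)^('n \<times> 'n)"
  assumes cM: "compatible M" and N3: "CARD('n) \<ge> 3"
    and tr: "\<And>i i'. ptr_right M i i' = (if i = i' then 1 / of_nat CARD('n) else 0)"
    and cd: "c \<noteq> d"
  shows "M$(idx0,c)$(idx0,d) = 0"
proof -
  define s where "s = complex_of_real (diag_weight TYPE('n))"
  have ss: "s * s = of_nat CARD('n) - 1"
    using diag_weight_sq_complex[where 'n='n] unfolding s_def by (simp only: power2_eq_square)
  have idx0_k: "M$(idx0,idx0)$(idx0,k) = 0" if k: "k \<noteq> idx0" for k
  proof -
    define w where "w = M$(idx0,idx0)$(idx0,k)"
    have e1: "w + s * cnj w = 0"
      using ptr_right_idx0_k[OF cM k] tr[of idx0 k] k compat_herm[OF cM, of "(idx0,k)" "(idx0,idx0)"]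
      by (simp add: w_def s_def)
    from arg_cong[OF e1, of cnj] have "cnj w + s * w = 0" by (simp add: s_def)
    have "w = - s * cnj w" using e1 by (simp add: eq_neg_iff_add_eq_0)
    also have "cnj w = - s * w" using \<open>cnj w + s * w = 0\<close> by (simp add: eq_neg_iff_add_eq_0)
    finally have "w = s * s * w" by simp
    then have "(of_nat CARD('n) - 2) * w = 0" unfolding ss by (simp add: algebra_simps)
    moreover have "(of_nat CARD('n) :: complex) - 2 \<noteq> 0" by (rule card_minus_two[OF N3])
    ultimately show ?thesis by (simp add: w_def)
  qed
  show ?thesis
  proof (cases "c = idx0 \<or> d = idx0")
    case True
    then show ?thesis
      using cd idx0_k[of d] idx0_k[of c] compat_herm[OF cM, of "(idx0,c)" "(idx0,idx0)"] by auto
  next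
    case False
    then show ?thesis using ptr_right_k_l[OF cM, of c d] tr[of c d] cd by simp
  qed
qed

text \<open>Under the same hypotheses the diagonal block entries are \<open>1/N\<^sup>2\<close>: with
  \<open>a = M$(i0,i0)$(i0,i0)\<close> the diagonal of the partial trace gives
  \<open>M$(i0,k)$(i0,k) = 1/N - (N-1) a\<close> and \<open>1/N = a + (N-1)(1/N - (N-1) a)\<close>.\<close>
lemma compatible_block_diag:
  fixes M :: "complex^('n::finite \<times> 'n)^('n \<times> 'n)"
  assumes cM: "compatible M" and N3: "CARD('n) \<ge> 3"
    and tr: "\<And>i i'. ptr_right M i i' = (if i = i' then 1 / of_nat CARD('n) else 0)"
  shows "M$(idx0,c)$(idx0,c) = 1 / (of_nat CARD('n))\<^sup>2"
proof -
  define N where "N = (of_nat CARD('n) :: complex)"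
  have N0: "N \<noteq> 0" and N2: "N - 2 \<noteq> 0"
    using card_minus_two[OF N3] unfolding N_def by simp_all
  define a where "a = M$(idx0,idx0)$(idx0,idx0)"
  have kk: "M$(idx0,k)$(idx0,k) = 1 / N - (N - 1) * a" if k: "k \<noteq> idx0" for k
    using ptr_right_k_k[OF cM k] tr[of k k] k by (simp add: a_def N_def eq_diff_eq)
  have "1 / N = ptr_right M idx0 idx0" using tr[of idx0 idx0] by (simp add: N_def)
  also have "\<dots> = a + (\<Sum>j\<in>UNIV - {idx0}. M$(idx0,j)$(idx0,j))"
    unfolding ptr_right_def a_def by (subst sum.remove[of UNIV idx0]) auto
  also have "\<dots> = a + (N - 1) * (1 / N - (N - 1) * a)"
    by (simp add: kk N_def card_Diff_singleton of_nat_diff)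
  finally have "1 / N = a + (N - 1) * (1 / N - (N - 1) * a)" .
  then have "N * (N - 2) * (N * a) = (N - 2) * 1"
    using N0 by (simp add: field_simps)
  then have "(N - 2) * (N * (N * a) - 1) = 0"
    by (simp add: algebra_simps)
  then have "N * (N * a) = 1" using N2 by simp
  then have a: "a = 1 / N\<^sup>2" using N0 by (simp add: field_simps power2_eq_square)
  show ?thesis
  proof (cases "c = idx0")
    case False
    then show ?thesis
      unfolding kk[OF False] a N_def[symmetric] using N0 by (simp add: field_simps power2_eq_square)
  qed (use a in \<open>simp add: a_def N_def\<close>)
qed

lemma compatible_unique:
  fixes M :: "complex^('n::finite \<times> 'n)^('n \<times> 'n)"
  assumes cM: "compatible M" and N3: "CARD('n) \<ge> 3"
    and tr: "\<And>i i'. ptr_right M i i' = (if i = i' then 1 / of_nat CARD('n) else 0)"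
  shows "M = witness"
  by (rule compatible_eqI[OF cM compatible_witness])
     (simp add: witness_block compatible_block_offdiag[OF cM N3 tr]
        compatible_block_diag[OF cM N3 tr])

section \<open>The witness is an extreme point of \<open>Gamma_mt\<close>\<close>

lemma ptr_right_witness:
  "ptr_right (witness :: complex^('n::finite \<times> 'n)^('n \<times> 'n)) i i'
     = (if i = i' then 1 / of_nat CARD('n) else 0)"
proof -
  let ?N = "of_nat CARD('n) :: complex"
  let ?W = "witness :: complex^('n \<times> 'n)^('n \<times> 'n)"
  have cW: "compatible ?W" by (rule compatible_witness)
  have N0: "?N \<noteq> 0" by simp
  consider "i = idx0" "i' = idx0" | "i = idx0" "i' \<noteq> idx0" | "i \<noteq> idx0" "i' = idx0"
    | "i \<noteq> idx0" "i' \<noteq> idx0" "i = i'" | "i \<noteq> idx0" "i' \<noteq> idx0" "i \<noteq> i'"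
    by blast
  then show ?thesis
  proof cases
    case 1
    then have "ptr_right ?W i i' = (\<Sum>j\<in>(UNIV::'n set). 1 / ?N^2)"
      unfolding ptr_right_def by (intro sum.cong refl) (simp add: witness_block)
    then show ?thesis using 1 N0 by (simp add: power2_eq_square)
  next
    case 2
    then show ?thesis by (simp add: ptr_right_idx0_k[OF cW] witness_block)
  next
    case 3
    have "ptr_right ?W i i' = cnj (ptr_right ?W i' i)"
      unfolding ptr_right_def cnj_sum by (intro sum.cong refl) (rule compat_herm[OF cW])
    then show ?thesis using 3 by (simp add: ptr_right_idx0_k[OF cW] witness_block)
  next
    case 4
    then have "ptr_right ?W i i' = 1 / ?N^2 + (?N - 1) * (1 / ?N^2)"
      by (simp add: ptr_right_k_k[OF cW] witness_block)
    then show ?thesis using 4 N0 by (simp add: field_simps power2_eq_square)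
  next
    case 5
    then show ?thesis by (simp add: ptr_right_k_l[OF cW] witness_block)
  qed
qed

text \<open>The witness is invariant under swapping the tensor factors, so its two partial
  traces coincide.\<close>
lemma ptr_left_witness:
  "ptr_left (witness :: complex^('n::finite \<times> 'n)^('n \<times> 'n)) j j' = ptr_right witness j j'"
  unfolding ptr_left_def ptr_right_def witness_entry by (simp add: wvec_swap[of _ _ j] wvec_swap[of _ _ j'])

lemma trace_witness: "trace (witness :: complex^('n::finite \<times> 'n)^('n \<times> 'n)) = 1"
proof -
  have "trace (witness :: complex^('n \<times> 'n)^('n \<times> 'n)) = (\<Sum>i\<in>(UNIV::'n set). ptr_right witness i i)"
    unfolding trace_def ptr_right_def by (rule sum_UNIV_prod)
  then show ?thesis by (simp add: ptr_right_witness)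
qed

lemma witness_in_Gamma: "(witness :: complex^('n::finite \<times> 'n)^('n \<times> 'n)) \<in> Gamma_mt"
  unfolding Gamma_mt_iff density_def
  by (simp add: witness_def psd_gram trace_witness[unfolded witness_def]
      ptr_left_witness[unfolded witness_def] ptr_right_witness[unfolded witness_def])

text \<open>A point of \<open>Gamma_mt\<close> having the witness in the interior of a segment towards another
  point of \<open>Gamma_mt\<close> is compatible, hence equal to the witness.\<close>
lemma Gamma_segment_witness:
  fixes A B :: "complex^('n::finite \<times> 'n)^('n \<times> 'n)"
  assumes A: "A \<in> Gamma_mt" and B: "B \<in> Gamma_mt" and u: "0 < u" "u < 1"
    and W: "witness = (1 - u) *\<^sub>R A + u *\<^sub>R B" and N3: "CARD('n) \<ge> 3"
  shows "A = witness"
proof (rule compatible_unique[OF _ N3])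
  have psd: "psd A" "psd B" using A B by (simp_all add: Gamma_mt_iff density_def)
  show "compatible A"
    by (rule compatible_if_kernel)
       (use psd psd_segment_kernel[OF psd u] W in \<open>auto simp: psd_iff_qf\<close>)
  show "ptr_right A i i' = (if i = i' then 1 / of_nat CARD('n) else 0)" for i i'
    using A by (simp add: Gamma_mt_iff)
qed

lemma witness_extreme:
  assumes N3: "CARD('n::finite) \<ge> 3"
  shows "(witness :: complex^('n \<times> 'n)^('n \<times> 'n)) extreme_point_of Gamma_mt"
  unfolding extreme_point_of_def
proof (intro conjI ballI notI)
  show "witness \<in> Gamma_mt" by (rule witness_in_Gamma)
next
  fix a b :: "complex^('n \<times> 'n)^('n \<times> 'n)"
  assume a: "a \<in> Gamma_mt" and b: "b \<in> Gamma_mt" and "witness \<in> open_segment a b"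
  then obtain u where ab: "a \<noteq> b" and u: "0 < u" "u < 1"
    and W: "witness = (1 - u) *\<^sub>R a + u *\<^sub>R b"
    unfolding in_segment by blast
  have "a = witness" by (rule Gamma_segment_witness[OF a b u W N3])
  moreover have "b = witness"
  proof (rule Gamma_segment_witness[OF b a _ _ _ N3])
    show "0 < 1 - u" "1 - u < 1" using u by auto
    show "witness = (1 - (1 - u)) *\<^sub>R b + (1 - u) *\<^sub>R a" using W by (simp add: add.commute)
  qed
  ultimately show False using ab by simp
qed

section \<open>The rank of the witness\<close>

lemma witness_row_idx0:
  "row (idx0,c) (witness :: complex^('n::finite \<times> 'n)^('n \<times> 'n))
     = (\<chi> q. complex_of_real (wvec c q / real CARD('n)))"
proof -
  have "\<And>q. (\<Sum>e\<in>UNIV. wvec e (idx0,c) * wvec e q) = wvec c q / real CARD('n)"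
    unfolding wvec_idx0 by (subst sum_UNIV_single[of c]) auto
  then show ?thesis by (simp add: row_def witness_entry)
qed

lemma witness_rows_span:
  "vec.span (rows (witness :: complex^('n::finite \<times> 'n)^('n \<times> 'n)))
     = vec.span (range (\<lambda>c. row (idx0,c) witness))"
proof -
  let ?W = "witness :: complex^('n \<times> 'n)^('n \<times> 'n)"
  let ?R = "range (\<lambda>c. row (idx0,c) ?W)"
  have "row p ?W \<in> vec.span ?R" for p
  proof -
    have "row p ?W = (\<Sum>c\<in>UNIV. complex_of_real (wvec c p * real CARD('n)) *s row (idx0,c) ?W)"
      unfolding witness_row_idx0
      by (simp add: vec_eq_iff row_def witness_entry of_real_sum[symmetric] mult_ac)
    also have "\<dots> \<in> vec.span ?R"
      by (intro vec.span_sum vec.span_scale vec.span_base) simp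
    finally show ?thesis .
  qed
  moreover have "?R \<subseteq> rows ?W" unfolding rows_def by blast
  ultimately show ?thesis
    unfolding vec.span_eq rows_def using vec.span_superset by blast
qed

lemma rank_witness: "rank (witness :: complex^('n::finite \<times> 'n)^('n \<times> 'n)) = CARD('n)"
proof -
  define f where "f = (\<lambda>c::'n. row (idx0,c) (witness :: complex^('n \<times> 'n)^('n \<times> 'n)))"
  have fz: "f c $ (idx0, d) = (if c = d then complex_of_real (1 / (real CARD('n))^2) else 0)" for c d
    by (simp add: f_def witness_row_idx0 wvec_idx0 power2_eq_square)
  have inj: "inj f"
  proof (rule injI)
    fix c d assume "f c = f d"
    then have "f c $ (idx0,c) = f d $ (idx0,c)" by simp
    then show "c = d" by (simp add: fz split: if_splits)
  qed
  have "vec.independent (range f)"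
  proof
    assume "vec.dependent (range f)"
    then obtain w where w: "\<exists>v\<in>range f. w v \<noteq> 0" "(\<Sum>v\<in>range f. w v *s v) = 0"
      using vec.dependent_finite[of "range f"] by auto
    then obtain c where c: "w (f c) \<noteq> 0" by blast
    have "(\<Sum>d\<in>UNIV. w (f d) *s f d) = 0"
      using w(2) sum.reindex[OF inj, of "\<lambda>v. w v *s v"] by (simp add: comp_def)
    then have "(\<Sum>d\<in>UNIV. w (f d) *s f d) $ (idx0,c) = 0" by simp
    moreover have "(\<Sum>d\<in>UNIV. w (f d) *s f d) $ (idx0,c) = w (f c) * complex_of_real (1 / (real CARD('n))^2)"
      by (simp add: fz sum_UNIV_single[of c])
    ultimately show False using c by simp
  qed
  then have "vec.dim (range f) = CARD('n)"
    using vec.dim_eq_card_independent card_image[OF inj] by metis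
  then show ?thesis
    using witness_rows_span[where 'n='n] vec.dim_span
    unfolding row_rank_def_gen f_def by metis
qed

text \<open>\<open>MR\<close> bounds the rank of every extreme point, the ranks being at most \<open>N\<^sup>2\<close>.\<close>
lemma rank_le_MR:
  fixes D :: "complex^('n::finite \<times> 'n)^('n \<times> 'n)"
  assumes "D extreme_point_of Gamma_mt"
  shows "rank D \<le> MR TYPE('n)"
proof -
  let ?S = "rank ` {D :: complex^('n \<times> 'n)^('n \<times> 'n). D extreme_point_of Gamma_mt}"
  have "?S \<subseteq> {..CARD('n \<times> 'n)}"
  proof
    fix r assume "r \<in> ?S"
    then obtain E :: "complex^('n \<times> 'n)^('n \<times> 'n)" where "r = rank E" by blast
    then show "r \<in> {..CARD('n \<times> 'n)}"
      using dim_subset_UNIV_cart_gen[of "rows E"] by (simp add: row_rank_def_gen)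
  qed
  then have "finite ?S" by (rule finite_subset) simp
  then show ?thesis using assms by (simp add: MR_def)
qed

theorem theorem2p7:
  assumes "CARD('n::finite) \<ge> 5"
  shows "(\<exists>D :: complex^('n \<times> 'n)^('n \<times> 'n).
            D extreme_point_of Gamma_mt \<and> rank D = CARD('n))
         \<and> CARD('n) \<le> MR TYPE('n)"
proof -
  have ext: "(witness :: complex^('n \<times> 'n)^('n \<times> 'n)) extreme_point_of Gamma_mt"
    by (rule witness_extreme) (use assms in simp)
  show ?thesis
    using ext rank_witness rank_le_MR[OF ext] by metis
qed

end
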